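(* Let $N$ be an augmented network containing $G_{\mathrm{UN}}$. Suppose $\Gamma_1,\Gamma_2$ are distinct minimal edge-cuts of $N$, each consisting only of external Steiner edges. If there is a component $C$ of $G_{\mathrm{UN}}$ such that every edge in $\Gamma_1\cup\Gamma_2$ is incident to (has an endpoint in) $C$, then $\Gamma_1\cap\Gamma_2=\emptyset$.
   Context: All graphs are finite, simple and undirected. The vertex-connectivity $c(G)$ is the minimum number of vertices whose removal yields a disconnected or trivial graph, with $c(K_n)=n-1$ and the convention $c(K_1)=c(K_2)=2$; $G$ is $2$-connected if $c(G)\ge2$. An edge-cut of a graph $G$ is a set $E$ of edges such that $G-E$ has strictly more components than $G$; it is minimal if minimal by inclusion. Setting: $X$ is a set of terminals and $S$ a set of at most $k$ Steiner points; $\Delta=5$ or $7$ according as $1<p<\infty$ or $p\in\{1,\infty\}$. A Steiner edge is an edge incident to a Steiner point; it is external if its other endpoint is a terminal. $G_{\mathrm{UN}}$ is a fixed graph with vertex set $X\cup S$ containing no Steiner edges, with $b(G_{\mathrm{UN}})\le \Delta k$, where $b$ counts leaf blocks plus twice isolated blocks (blocks = maximal $2$-connected subgraphs, including isolated vertices; a leaf block contains exactly one cut-vertex, an isolated block none). An augmented network containing $G_{\mathrm{UN}}$ is a $2$-connected graph obtained from $G_{\mathrm{UN}}$ by adding Steiner edges. *)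

theory Defs
  imports Main
begin

definition simple_graph :: "'a set \<Rightarrow> 'a set set \<Rightarrow> bool" where
  "simple_graph V E \<longleftrightarrow> finite V \<and>
     (\<forall>e\<in>E. \<exists>u v. e = {u, v} \<and> u \<in> V \<and> v \<in> V \<and> u \<noteq> v)"

definition adj :: "'a set set \<Rightarrow> 'a \<Rightarrow> 'a \<Rightarrow> bool" where
  "adj E u v \<longleftrightarrow> {u, v} \<in> E"

definition components :: "'a set \<Rightarrow> 'a set set \<Rightarrow> 'a set set" where
  "components V E = {{v \<in> V. (adj E)\<^sup>*\<^sup>* u v} | u. u \<in> V}"

definition num_components :: "'a set \<Rightarrow> 'a set set \<Rightarrow> nat" where
  "num_components V E = card (components V E)"

definition connected_graph :: "'a set \<Rightarrow> 'a set set \<Rightarrow> bool" where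
  "connected_graph V E \<longleftrightarrow> (\<forall>u\<in>V. \<forall>v\<in>V. (adj E)\<^sup>*\<^sup>* u v)"

definition delete_vertices :: "'a set \<Rightarrow> 'a set set \<Rightarrow> 'a set \<Rightarrow> 'a set set" where
  "delete_vertices V E W = {e \<in> E. e \<inter> W = {}}"

definition complete_graph :: "'a set \<Rightarrow> 'a set set \<Rightarrow> bool" where
  "complete_graph V E \<longleftrightarrow> (\<forall>u\<in>V. \<forall>v\<in>V. u \<noteq> v \<longrightarrow> {u, v} \<in> E)"

definition vertex_connectivity :: "'a set \<Rightarrow> 'a set set \<Rightarrow> nat" where
  "vertex_connectivity V E =
     (if complete_graph V E then (if card V \<le> 2 then 2 else card V - 1)
      else Min {card W | W. W \<subseteq> V \<and>
              (\<not> connected_graph (V - W) (delete_vertices V E W) \<or> card (V - W) = 1)})"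

definition two_connected :: "'a set \<Rightarrow> 'a set set \<Rightarrow> bool" where
  "two_connected V E \<longleftrightarrow> vertex_connectivity V E \<ge> 2"

definition edge_cut :: "'a set \<Rightarrow> 'a set set \<Rightarrow> 'a set set \<Rightarrow> bool" where
  "edge_cut V E \<Gamma> \<longleftrightarrow> \<Gamma> \<subseteq> E \<and> num_components V (E - \<Gamma>) > num_components V E"

definition minimal_edge_cut :: "'a set \<Rightarrow> 'a set set \<Rightarrow> 'a set set \<Rightarrow> bool" where
  "minimal_edge_cut V E \<Gamma> \<longleftrightarrow> edge_cut V E \<Gamma> \<and> (\<forall>\<Gamma>'. \<Gamma>' \<subset> \<Gamma> \<longrightarrow> \<not> edge_cut V E \<Gamma>')"

text \<open>Steiner edges (incident to a Steiner point in S) and external Steiner edges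
(Steiner point joined to a terminal in X).\<close>
definition steiner_edge :: "'a set \<Rightarrow> 'a set \<Rightarrow> bool" where
  "steiner_edge S e \<longleftrightarrow> e \<inter> S \<noteq> {}"

definition external_steiner_edge :: "'a set \<Rightarrow> 'a set \<Rightarrow> 'a set \<Rightarrow> bool" where
  "external_steiner_edge X S e \<longleftrightarrow> (\<exists>s x. e = {s, x} \<and> s \<in> S \<and> x \<in> X)"

text \<open>N (edge set EN on X \<union> S) is an augmented network containing G_UN (edge set EUN).\<close>
definition augmented_network :: "'a set \<Rightarrow> 'a set \<Rightarrow> 'a set set \<Rightarrow> 'a set set \<Rightarrow> bool" where
  "augmented_network X S EUN EN \<longleftrightarrow>
     simple_graph (X \<union> S) EN \<and> EUN \<subseteq> EN \<and>
     (\<forall>e \<in> EN - EUN. steiner_edge S e) \<and> two_connected (X \<union> S) EN"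

end

theory Submission
  imports Defs
begin

text \<open>Let \<open>A\<^sub>i\<close> be the vertices reachable from \<open>C\<close> in \<open>N - \<Gamma>\<^sub>i\<close>. Since \<open>G\<^sub>U\<^sub>N\<close> has no
Steiner edges, \<open>C\<close> survives the removal of either cut, and since every edge of the
minimal cut \<open>\<Gamma>\<^sub>i\<close> has an endpoint in \<open>C \<subseteq> A\<^sub>i\<close>, \<open>\<Gamma>\<^sub>i\<close> is exactly the set of edges leaving
\<open>A\<^sub>i\<close>. An edge leaving \<open>A\<^sub>1 \<union> A\<^sub>2\<close> leaves \<open>A\<^sub>1\<close> or \<open>A\<^sub>2\<close>, so it lies in \<open>\<Gamma>\<^sub>1 \<union> \<Gamma>\<^sub>2\<close>, hence
has an endpoint in \<open>C \<subseteq> A\<^sub>1 \<inter> A\<^sub>2\<close> and therefore leaves both sets: the edges leaving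
\<open>A\<^sub>1 \<union> A\<^sub>2\<close> form a cut contained in \<open>\<Gamma>\<^sub>1 \<inter> \<Gamma>\<^sub>2\<close>. A common edge of \<open>\<Gamma>\<^sub>1\<close> and \<open>\<Gamma>\<^sub>2\<close> leaves
\<open>A\<^sub>1 \<union> A\<^sub>2\<close>, so this cut is nonempty, and minimality forces \<open>\<Gamma>\<^sub>1 = \<Gamma>\<^sub>2\<close>.\<close>

abbreviation reach :: "'a set set \<Rightarrow> 'a \<Rightarrow> 'a \<Rightarrow> bool" where
  "reach E \<equiv> (adj E)\<^sup>*\<^sup>*"

definition edge_boundary :: "'a set set \<Rightarrow> 'a set \<Rightarrow> 'a set set" where
  "edge_boundary E U = {f \<in> E. f \<inter> U \<noteq> {} \<and> f - U \<noteq> {}}"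

lemma adj_sym: "adj E a b \<Longrightarrow> adj E b a"
  by (simp add: adj_def insert_commute)

lemma reach_sym: "reach E a b \<Longrightarrow> reach E b a"
  by (induction rule: rtranclp.induct) (auto intro: adj_sym converse_rtranclp_into_rtranclp)

lemma reach_via: "reach E x p \<Longrightarrow> reach E x q \<Longrightarrow> reach E p q"
  by (meson reach_sym rtranclp_trans)

lemma reach_mono: "E \<subseteq> F \<Longrightarrow> reach E a b \<Longrightarrow> reach F a b"
  by (erule rtranclp_mono[THEN predicate2D, rotated]) (auto simp: adj_def)

lemma reach_closed:
  assumes "\<And>p q. {p, q} \<in> E \<Longrightarrow> p \<in> U \<Longrightarrow> q \<in> U"
  shows "reach E a b \<Longrightarrow> a \<in> U \<Longrightarrow> b \<in> U"
  by (induction rule: rtranclp.induct) (use assms in \<open>auto simp: adj_def\<close>)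

lemma reach_closed_edge_boundary:
  "reach (E - edge_boundary E U) a b \<Longrightarrow> a \<in> U \<Longrightarrow> b \<in> U"
  by (rule reach_closed) (auto simp: edge_boundary_def)

lemma components_eq_image: "components V E = (\<lambda>u. {v \<in> V. reach E u v}) ` V"
  unfolding components_def by auto

lemma simple_graph_edge:
  assumes "simple_graph V E" "f \<in> E"
  obtains u v where "f = {u, v}" "u \<in> V" "v \<in> V" "u \<noteq> v"
  using assms unfolding simple_graph_def by blast

lemma simple_graph_edge_crossing:
  assumes "simple_graph V E" "f \<in> E" "f \<inter> U \<noteq> {}" "f - U \<noteq> {}"
  obtains p q where "f = {p, q}" "p \<in> U" "q \<notin> U"
proof -
  obtain a b where ab: "f = {a, b}"
    using simple_graph_edge[OF assms(1,2)] by blast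
  show thesis
  proof (cases "a \<in> U")
    case True
    then show thesis using that ab assms(4) by blast
  next
    case False
    then show thesis using that[of b a] ab assms(3) by (simp add: insert_commute)
  qed
qed

text \<open>Merging the classes of \<open>E - \<Gamma>\<close> into those of \<open>E\<close> identifies the distinct
classes of \<open>u\<close> and \<open>v\<close>, so there are strictly fewer classes of \<open>E\<close>.\<close>
lemma edge_cut_if_disconnected_edge:
  assumes sg: "simple_graph V E" and sub: "\<Gamma> \<subseteq> E" and uv: "{u, v} \<in> \<Gamma>"
    and disc: "\<not> reach (E - \<Gamma>) u v"
  shows "edge_cut V E \<Gamma>"
proof -
  have "finite V" using sg by (simp add: simple_graph_def)
  have uvV: "u \<in> V" "v \<in> V"
    using sg uv sub by (auto elim: simple_graph_edge simp: doubleton_eq_iff)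
  define class' where "class' a = {w \<in> V. reach (E - \<Gamma>) a w}" for a
  define merge where "merge K = {w \<in> V. \<exists>k\<in>K. reach E k w}" for K
  have merge_class': "merge (class' a) = {w \<in> V. reach E a w}" if "a \<in> V" for a
    using that reach_mono[of "E - \<Gamma>" E]
    by (auto simp: merge_def class'_def intro: rtranclp_trans)
  have comps: "components V E = merge ` components V (E - \<Gamma>)"
    by (auto simp: components_eq_image class'_def[symmetric] image_image merge_class')
  have "adj E u v"
    using uv sub by (auto simp: adj_def)
  then have "reach E u v" "reach E v u"
    by (auto intro: adj_sym)
  then have "merge (class' u) = merge (class' v)"
    using uvV by (auto simp: merge_class' intro: rtranclp_trans)
  moreover have "class' u \<noteq> class' v"
    using disc uvV by (auto simp: class'_def)
  moreover have "class' u \<in> components V (E - \<Gamma>)" "class' v \<in> components V (E - \<Gamma>)"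
    using uvV unfolding components_eq_image class'_def by blast+
  ultimately have "\<not> inj_on merge (components V (E - \<Gamma>))"
    unfolding inj_on_def by blast
  moreover have fin: "finite (components V (E - \<Gamma>))"
    using \<open>finite V\<close> by (simp add: components_eq_image)
  ultimately have "card (merge ` components V (E - \<Gamma>)) \<noteq> card (components V (E - \<Gamma>))"
    using inj_on_iff_eq_card by blast
  with fin have "card (merge ` components V (E - \<Gamma>)) < card (components V (E - \<Gamma>))"
    using card_image_le le_neq_implies_less by blast
  then show ?thesis
    using sub unfolding edge_cut_def num_components_def comps by simp
qed

lemma disconnected_edge_if_edge_cut:
  assumes "edge_cut V E \<Gamma>"
  obtains u v where "{u, v} \<in> \<Gamma>" "\<not> reach (E - \<Gamma>) u v"
proof (rule ccontr)
  assume "\<not> thesis"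
  with that have bypass: "reach (E - \<Gamma>) u v" if "{u, v} \<in> \<Gamma>" for u v
    using \<open>{u, v} \<in> \<Gamma>\<close> by blast
  have "reach E a b \<Longrightarrow> reach (E - \<Gamma>) a b" for a b
  proof (induction rule: rtranclp.induct)
    case (rtrancl_into_rtrancl a b c)
    show ?case
    proof (cases "{b, c} \<in> \<Gamma>")
      case True
      then show ?thesis by (rule rtranclp_trans[OF rtrancl_into_rtrancl.IH bypass])
    next
      case False
      then show ?thesis
        using rtrancl_into_rtrancl by (auto simp: adj_def intro: rtranclp.rtrancl_into_rtrancl)
    qed
  qed simp
  then have "reach E = reach (E - \<Gamma>)"
    by (auto intro!: ext reach_mono[of "E - \<Gamma>" E])
  then show False
    using assms by (simp add: edge_cut_def num_components_def components_eq_image)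
qed

lemma edge_cut_edge_boundary:
  assumes "simple_graph V E" and "edge_boundary E U \<noteq> {}"
  shows "edge_cut V E (edge_boundary E U)"
proof -
  obtain f where f: "f \<in> edge_boundary E U" using assms(2) by blast
  then have "f \<in> E" "f \<inter> U \<noteq> {}" "f - U \<noteq> {}"
    unfolding edge_boundary_def by blast+
  then obtain p q where pq: "f = {p, q}" "p \<in> U" "q \<notin> U"
    by (rule simple_graph_edge_crossing[OF assms(1)])
  have "edge_boundary E U \<subseteq> E"
    by (auto simp: edge_boundary_def)
  moreover have "{p, q} \<in> edge_boundary E U"
    using f pq(1) by simp
  moreover have "\<not> reach (E - edge_boundary E U) p q"
    using reach_closed_edge_boundary[of E U p q] pq(2,3) by blast
  ultimately show ?thesis
    by (rule edge_cut_if_disconnected_edge[OF assms(1)])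
qed

lemma edge_boundary_reach_class_subset:
  assumes "simple_graph V E"
  shows "edge_boundary E {w. reach (E - \<Gamma>) u w} \<subseteq> \<Gamma>"
proof
  fix f assume f: "f \<in> edge_boundary E {w. reach (E - \<Gamma>) u w}"
  then have "f \<in> E" "f \<inter> {w. reach (E - \<Gamma>) u w} \<noteq> {}" "f - {w. reach (E - \<Gamma>) u w} \<noteq> {}"
    unfolding edge_boundary_def by blast+
  then obtain p q where "f = {p, q}" "p \<in> {w. reach (E - \<Gamma>) u w}" "q \<notin> {w. reach (E - \<Gamma>) u w}"
    by (rule simple_graph_edge_crossing[OF assms])
  then have pq: "f = {p, q}" "reach (E - \<Gamma>) u p" "\<not> reach (E - \<Gamma>) u q"
    by simp_all
  show "f \<in> \<Gamma>"
  proof (rule ccontr)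
    assume "f \<notin> \<Gamma>"
    then have "adj (E - \<Gamma>) p q"
      using f pq(1) by (auto simp: adj_def edge_boundary_def)
    then show False
      using pq(3) rtranclp.rtrancl_into_rtrancl[OF pq(2)] by blast
  qed
qed

lemma minimal_edge_cut_eq_edge_boundary:
  assumes "simple_graph V E" "minimal_edge_cut V E \<Gamma>"
    and "edge_boundary E U \<noteq> {}" "edge_boundary E U \<subseteq> \<Gamma>"
  shows "edge_boundary E U = \<Gamma>"
proof -
  have "edge_cut V E (edge_boundary E U)"
    by (rule edge_cut_edge_boundary[OF assms(1,3)])
  then show ?thesis
    using assms(2,4) unfolding minimal_edge_cut_def by blast
qed

text \<open>A minimal cut is the set of edges leaving one class of \<open>E - \<Gamma>\<close>.\<close>
lemma minimal_edge_cut_edge_disconnected: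
  assumes sg: "simple_graph V E" and mc: "minimal_edge_cut V E \<Gamma>" and ab: "{a, b} \<in> \<Gamma>"
  shows "\<not> reach (E - \<Gamma>) a b"
proof -
  obtain u v where uv: "{u, v} \<in> \<Gamma>" "\<not> reach (E - \<Gamma>) u v"
    using mc by (auto simp: minimal_edge_cut_def elim: disconnected_edge_if_edge_cut)
  define R where "R = {w. reach (E - \<Gamma>) u w}"
  have "\<Gamma> \<subseteq> E"
    using mc by (simp add: minimal_edge_cut_def edge_cut_def)
  moreover have "u \<in> R" "v \<notin> R"
    using uv(2) by (simp_all add: R_def)
  ultimately have "{u, v} \<in> edge_boundary E R"
    using uv(1) by (auto simp: edge_boundary_def)
  moreover have "edge_boundary E R \<subseteq> \<Gamma>"
    unfolding R_def by (rule edge_boundary_reach_class_subset[OF sg])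
  ultimately have bd: "edge_boundary E R = \<Gamma>"
    using minimal_edge_cut_eq_edge_boundary[OF sg mc] by blast
  show ?thesis
  proof
    assume r: "reach (E - \<Gamma>) a b"
    have "a \<in> R \<longleftrightarrow> b \<in> R"
      using reach_closed_edge_boundary[of E R a b] reach_closed_edge_boundary[of E R b a]
        r reach_sym[OF r] unfolding bd by blast
    moreover have "{a, b} \<in> edge_boundary E R"
      using ab bd by simp
    ultimately show False
      unfolding edge_boundary_def by blast
  qed
qed

lemma minimal_edge_cut_eq_edge_boundary_of_class:
  assumes sg: "simple_graph V E" and mc: "minimal_edge_cut V E \<Gamma>"
    and meets: "\<forall>f\<in>\<Gamma>. f \<inter> {w. reach (E - \<Gamma>) u w} \<noteq> {}"
  shows "\<Gamma> = edge_boundary E {w. reach (E - \<Gamma>) u w}"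
proof -
  define R where "R = {w. reach (E - \<Gamma>) u w}"
  have "f \<in> edge_boundary E R" if f: "f \<in> \<Gamma>" for f
  proof -
    have "f \<in> E" using f mc by (auto simp: minimal_edge_cut_def edge_cut_def)
    then obtain p q where pq: "f = {p, q}" using sg by (auto elim: simple_graph_edge)
    then have "{p, q} \<in> \<Gamma>"
      using f by simp
    then have "\<not> reach (E - \<Gamma>) p q"
      using minimal_edge_cut_edge_disconnected[OF sg mc] by blast
    then have "p \<notin> R \<or> q \<notin> R"
      using reach_via[of "E - \<Gamma>" u p q] unfolding R_def by blast
    moreover have "f \<inter> R \<noteq> {}"
      using meets f unfolding R_def by blast
    ultimately show ?thesis
      using pq \<open>f \<in> E\<close> unfolding edge_boundary_def by blast
  qed
  then show ?thesis
    using edge_boundary_reach_class_subset[OF sg] unfolding R_def by blast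
qed

lemma edge_boundary_Un_subset:
  "edge_boundary E (A \<union> B) \<subseteq> edge_boundary E A \<union> edge_boundary E B"
  by (auto simp: edge_boundary_def)

text \<open>For an edge meeting \<open>A \<inter> B\<close>, leaving \<open>A \<union> B\<close> means that its other endpoint lies
outside both sets.\<close>
lemma edge_boundary_Un_eq_Int:
  assumes "simple_graph V E"
    and meets: "\<forall>f \<in> edge_boundary E A \<union> edge_boundary E B. f \<inter> (A \<inter> B) \<noteq> {}"
  shows "edge_boundary E (A \<union> B) = edge_boundary E A \<inter> edge_boundary E B"
proof -
  have "f \<in> edge_boundary E (A \<union> B) \<longleftrightarrow> f \<in> edge_boundary E A \<inter> edge_boundary E B"
    if f: "f \<in> edge_boundary E A \<union> edge_boundary E B" for f
  proof -
    have "f \<in> E"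
      using f by (auto simp: edge_boundary_def)
    then obtain p q where "f = {p, q}"
      using simple_graph_edge[OF assms(1) \<open>f \<in> E\<close>] by blast
    moreover have "f \<inter> (A \<inter> B) \<noteq> {}"
      using meets f by blast
    ultimately show ?thesis
      by (auto simp: edge_boundary_def)
  qed
  then show ?thesis
    using edge_boundary_Un_subset[of E A B] by blast
qed

theorem lemma7:
  fixes X S :: "'a set" and EUN EN \<Gamma>1 \<Gamma>2 :: "'a set set" and C :: "'a set"
  assumes "finite X" and "finite S" and "X \<inter> S = {}"
    and "simple_graph (X \<union> S) EUN"
    and "\<forall>e\<in>EUN. \<not> steiner_edge S e"
    and "augmented_network X S EUN EN"
    and "minimal_edge_cut (X \<union> S) EN \<Gamma>1" and "minimal_edge_cut (X \<union> S) EN \<Gamma>2"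
    and "\<Gamma>1 \<noteq> \<Gamma>2"
    and "\<forall>e\<in>\<Gamma>1 \<union> \<Gamma>2. external_steiner_edge X S e"
    and "C \<in> components (X \<union> S) EUN"
    and "\<forall>e\<in>\<Gamma>1 \<union> \<Gamma>2. e \<inter> C \<noteq> {}"
  shows "\<Gamma>1 \<inter> \<Gamma>2 = {}"
proof (rule ccontr)
  assume common: "\<Gamma>1 \<inter> \<Gamma>2 \<noteq> {}"
  have sg: "simple_graph (X \<union> S) EN" and "EUN \<subseteq> EN"
    using assms(6) by (auto simp: augmented_network_def)
  obtain u0 where C: "C = {v \<in> X \<union> S. reach EUN u0 v}"
    using assms(11) unfolding components_eq_image by (rule imageE)
  define A1 where "A1 = {w. reach (EN - \<Gamma>1) u0 w}"
  define A2 where "A2 = {w. reach (EN - \<Gamma>2) u0 w}"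
  have "steiner_edge S f" if "f \<in> \<Gamma>1 \<union> \<Gamma>2" for f
    using assms(10) that unfolding external_steiner_edge_def steiner_edge_def by auto
  then have "EUN \<subseteq> EN - \<Gamma>1" "EUN \<subseteq> EN - \<Gamma>2"
    using \<open>EUN \<subseteq> EN\<close> assms(5) by blast+
  then have "C \<subseteq> A1 \<inter> A2"
    unfolding C A1_def A2_def using reach_mono[of EUN, of _ u0] by blast
  then have meets: "\<forall>f \<in> \<Gamma>1 \<union> \<Gamma>2. f \<inter> (A1 \<inter> A2) \<noteq> {}"
    using assms(12) by blast
  then have bd: "\<Gamma>1 = edge_boundary EN A1" "\<Gamma>2 = edge_boundary EN A2"
    unfolding A1_def A2_def
    by (intro minimal_edge_cut_eq_edge_boundary_of_class[OF sg] assms(7,8); auto)+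
  then have "edge_boundary EN (A1 \<union> A2) = \<Gamma>1 \<inter> \<Gamma>2"
    using edge_boundary_Un_eq_Int[OF sg] meets by simp
  then have "\<Gamma>1 \<inter> \<Gamma>2 = \<Gamma>1" "\<Gamma>1 \<inter> \<Gamma>2 = \<Gamma>2"
    using minimal_edge_cut_eq_edge_boundary[OF sg, of _ "A1 \<union> A2"] assms(7,8) common
    by auto
  then show False
    using assms(9) by simp
qed

end
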